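(* Let $X=\{x_1,\dots,x_S\}\subset\mathbb{R}^A$ be finite and $K\ge1$. In the reduced-space branch and bound algorithm for the $K$-center problem described in the context, the bounding operation is finitely consistent: at every step any unfathomed node can be further refined, and every decreasing sequence $\{M_{l_q}\}$ of successively refined nodes is finite.
   Context: The $K$-center problem is $z=\min_{\mu^1,\dots,\mu^K\in X}\max_s\min_k\|x_s-\mu^k\|_2^2$. Root region: the box $M_0=M_0^1\times\cdots\times M_0^K$, $M_0^k=\{\mu^k:\min_s x_{s,a}\le\mu^k_a\le\max_s x_{s,a}\ \forall a\}$. Nodes are boxes $M=M^1\times\cdots\times M^K$. Lower bound $\beta(M)=\max_s\min_k\min_{\mu^k\in M^k}\|x_s-\mu^k\|_2^2$; upper bound $\alpha(M)$ is the objective value at a feasible $\hat\mu\in X\cap M$. Algorithm: maintain a list of nodes; repeatedly remove a node with least lower bound, tighten it (shrinking boxes without excluding optimal solutions, including replacing each $M^k$ by the smallest box containing $X\cap M^k$); if $|X\cap M^k|>1$ for some $k$, bisect at its midpoint the coordinate $\mu^k_a$ of largest range, keeping a child only if each of its $K$ boxes contains a sample; update the best lower bound $\beta_i$ (minimum over the list) and best upper bound $\alpha_i$; delete nodes with $\beta(M')\ge\alpha_i$; stop if $\alpha_i-\beta_i\le\epsilon$ (tolerance $\epsilon>0$) or the list is empty. A node is unfathomed if it has not been deleted and not terminated. A bounding operation is called finitely consistent if, at every step, any unfathomed partition element can be further refined and any decreasing sequence of successively refined partition elements is finite. *)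

theory Defs
  imports "HOL-Analysis.Analysis"
begin

text \<open>Sample points live in \<open>real^'n\<close> (R^A with A = CARD('n)).
  A box is given by its lower and upper corner; a node is a family of boxes
  M k (only k < K is relevant), one box per center.\<close>

type_synonym 'n kbox = "(real^'n) \<times> (real^'n)"
type_synonym 'n node = "nat \<Rightarrow> 'n kbox"

definition boxset :: "'n::finite kbox \<Rightarrow> (real^'n) set" where
  "boxset B = cbox (fst B) (snd B)"

definition kcenter_obj :: "(real^'n::finite) set \<Rightarrow> nat \<Rightarrow> (nat \<Rightarrow> real^'n) \<Rightarrow> real" where
  "kcenter_obj X K mu = Max ((\<lambda>x. Min ((\<lambda>k. (norm (x - mu k))\<^sup>2) ` {..<K})) ` X)"

definition lower_bound :: "(real^'n::finite) set \<Rightarrow> nat \<Rightarrow> 'n node \<Rightarrow> real" where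
  "lower_bound X K M =
     Max ((\<lambda>x. Min ((\<lambda>k. INF m\<in>boxset (M k). (norm (x - m))\<^sup>2) ` {..<K})) ` X)"

definition node_valid :: "(real^'n::finite) set \<Rightarrow> nat \<Rightarrow> 'n node \<Rightarrow> bool" where
  "node_valid X K M \<longleftrightarrow> (\<forall>k<K. X \<inter> boxset (M k) \<noteq> {})"

definition hullbox :: "(real^'n::finite) set \<Rightarrow> 'n kbox \<Rightarrow> 'n kbox" where
  "hullbox X B = ((\<chi> a. Min ((\<lambda>x. x $ a) ` (X \<inter> boxset B))),
                  (\<chi> a. Max ((\<lambda>x. x $ a) ` (X \<inter> boxset B))))"

definition tighten :: "(real^'n::finite) set \<Rightarrow> 'n node \<Rightarrow> 'n node" where
  "tighten X M = (\<lambda>k. hullbox X (M k))"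

text \<open>Refinement step: tighten M, then (if some box contains more than one sample)
  bisect at its midpoint a coordinate of largest range of such a box; C is a kept child
  (every box of C contains a sample).\<close>
definition refine_child :: "(real^'n::finite) set \<Rightarrow> nat \<Rightarrow> 'n node \<Rightarrow> 'n node \<Rightarrow> bool" where
  "refine_child X K M C \<longleftrightarrow>
     (let T = tighten X M in
      \<exists>k<K. \<exists>a. card (X \<inter> boxset (T k)) > 1 \<and>
        (\<forall>a'. snd (T k) $ a' - fst (T k) $ a' \<le> snd (T k) $ a - fst (T k) $ a) \<and>
        (let l = fst (T k); u = snd (T k); mid = (l $ a + u $ a) / 2 in
          (C = T(k := (l, \<chi> i. if i = a then mid else u $ i)) \<or>
           C = T(k := (\<chi> i. if i = a then mid else l $ i, u)))) \<and>
        node_valid X K C)"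

end

theory Submission
  imports Defs
begin

text \<open>Tightening never changes which samples lie in a box of a valid node, and
  a bisection of the widest side of a tightened box holding two or more samples discards a
  sample lying on that side's far face. Hence every refinement strictly decreases the total
  number of samples held by the boxes, so refinement chains are finite. Conversely, if no
  tightened box holds two samples, each has shrunk to the single sample \<open>\<mu>\<^sup>k\<close> it contains,
  and the lower bound equals the objective at \<open>\<mu>\<close>, leaving no gap to close.\<close>

lemma mem_boxset: "x \<in> boxset B \<longleftrightarrow> (\<forall>i. fst B $ i \<le> x $ i \<and> x $ i \<le> snd B $ i)"
  unfolding boxset_def by (simp add: mem_box_cart)

lemma samples_subset_boxset_hullbox:
  assumes "finite X"
  shows "X \<inter> boxset B \<subseteq> boxset (hullbox X B)"
  using assms by (auto simp: hullbox_def mem_boxset)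

lemma boxset_hullbox_subset:
  assumes "finite X" and "X \<inter> boxset B \<noteq> {}"
  shows "boxset (hullbox X B) \<subseteq> boxset B"
proof
  fix x assume x: "x \<in> boxset (hullbox X B)"
  let ?S = "X \<inter> boxset B"
  have "fst B $ i \<le> x $ i \<and> x $ i \<le> snd B $ i" for i
  proof -
    have fin: "finite ((\<lambda>y. y $ i) ` ?S)" and ne: "(\<lambda>y. y $ i) ` ?S \<noteq> {}"
      using assms by auto
    obtain p where p: "p \<in> ?S" "p $ i = Min ((\<lambda>y. y $ i) ` ?S)"
      using Min_in[OF fin ne] by auto
    obtain q where q: "q \<in> ?S" "q $ i = Max ((\<lambda>y. y $ i) ` ?S)"
      using Max_in[OF fin ne] by auto
    have "p $ i \<le> x $ i" "x $ i \<le> q $ i"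
      using x p(2) q(2) by (simp_all add: hullbox_def mem_boxset)
    moreover have "fst B $ i \<le> p $ i" "q $ i \<le> snd B $ i"
      using p(1) q(1) by (simp_all add: mem_boxset)
    ultimately show ?thesis by linarith
  qed
  then show "x \<in> boxset B" by (simp add: mem_boxset)
qed

lemma samples_hullbox:
  assumes "finite X" and "X \<inter> boxset B \<noteq> {}"
  shows "X \<inter> boxset (hullbox X B) = X \<inter> boxset B"
  using samples_subset_boxset_hullbox[OF assms(1)] boxset_hullbox_subset[OF assms] by blast

lemma boxset_hullbox_singleton:
  assumes "X \<inter> boxset B = {x}"
  shows "boxset (hullbox X B) = {x}"
proof -
  have "hullbox X B = (x, x)" unfolding hullbox_def assms by (simp add: vec_eq_iff)
  then show ?thesis unfolding boxset_def by simp
qed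

lemma hullbox_upper_attained:
  assumes "finite X" and "X \<inter> boxset B \<noteq> {}"
  obtains y where "y \<in> X \<inter> boxset B" and "y $ a = snd (hullbox X B) $ a"
proof -
  have "Max ((\<lambda>x. x $ a) ` (X \<inter> boxset B)) \<in> (\<lambda>x. x $ a) ` (X \<inter> boxset B)"
    using assms by (intro Max_in) auto
  then show ?thesis using that by (auto simp: hullbox_def)
qed

lemma hullbox_lower_attained:
  assumes "finite X" and "X \<inter> boxset B \<noteq> {}"
  obtains z where "z \<in> X \<inter> boxset B" and "z $ a = fst (hullbox X B) $ a"
proof -
  have "Min ((\<lambda>x. x $ a) ` (X \<inter> boxset B)) \<in> (\<lambda>x. x $ a) ` (X \<inter> boxset B)"
    using assms by (intro Min_in) auto
  then show ?thesis using that by (auto simp: hullbox_def)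
qed

lemma samples_tighten:
  assumes "finite X" and "node_valid X K M" and "k < K"
  shows "X \<inter> boxset (tighten X M k) = X \<inter> boxset (M k)"
  using assms samples_hullbox unfolding tighten_def node_valid_def by blast

lemma widest_side_pos_if_two_samples:
  assumes "card (X \<inter> boxset B) > 1"
    and widest: "\<forall>i. snd B $ i - fst B $ i \<le> snd B $ a - fst B $ a"
  shows "fst B $ a < snd B $ a"
proof -
  obtain p q where pq: "p \<in> boxset B" "q \<in> boxset B" "p \<noteq> q"
    using assms(1) by (metis IntD2 One_nat_def card_le_Suc0_iff_eq card.infinite not_le zero_le)
  then obtain i where i: "p $ i \<noteq> q $ i" by (auto simp: vec_eq_iff)
  have "fst B $ i \<le> p $ i" "p $ i \<le> snd B $ i" "fst B $ i \<le> q $ i" "q $ i \<le> snd B $ i"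
    using pq(1,2) by (simp_all add: mem_boxset)
  with i widest[rule_format, of i] show ?thesis by linarith
qed

definition bisect_lower :: "'n::finite kbox \<Rightarrow> 'n \<Rightarrow> 'n kbox" where
  "bisect_lower B a = (fst B, \<chi> i. if i = a then (fst B $ a + snd B $ a) / 2 else snd B $ i)"

definition bisect_upper :: "'n::finite kbox \<Rightarrow> 'n \<Rightarrow> 'n kbox" where
  "bisect_upper B a = (\<chi> i. if i = a then (fst B $ a + snd B $ a) / 2 else fst B $ i, snd B)"

lemma boxset_bisect_lower_subset: "boxset (bisect_lower B a) \<subseteq> boxset B"
  by (auto simp: mem_boxset bisect_lower_def split: if_splits) (smt (verit))

lemma boxset_bisect_upper_subset: "boxset (bisect_upper B a) \<subseteq> boxset B"
  by (auto simp: mem_boxset bisect_upper_def split: if_splits) (smt (verit))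

lemma boxset_bisect_cover:
  assumes "x \<in> boxset B"
  shows "x \<in> boxset (bisect_lower B a) \<or> x \<in> boxset (bisect_upper B a)"
  using assms by (auto simp: mem_boxset bisect_lower_def bisect_upper_def)

lemma boxset_bisect_lower_coord:
  "x \<in> boxset (bisect_lower B a) \<Longrightarrow> x $ a \<le> (fst B $ a + snd B $ a) / 2"
  by (auto simp: mem_boxset bisect_lower_def dest: spec[of _ a])

lemma boxset_bisect_upper_coord:
  "x \<in> boxset (bisect_upper B a) \<Longrightarrow> (fst B $ a + snd B $ a) / 2 \<le> x $ a"
  by (auto simp: mem_boxset bisect_upper_def dest: spec[of _ a])

lemma refine_child_iff:
  "refine_child X K M C \<longleftrightarrow>
     (\<exists>k<K. \<exists>a. card (X \<inter> boxset (tighten X M k)) > 1 \<and>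
        (\<forall>i. snd (tighten X M k) $ i - fst (tighten X M k) $ i
             \<le> snd (tighten X M k) $ a - fst (tighten X M k) $ a) \<and>
        (C = (tighten X M)(k := bisect_lower (tighten X M k) a) \<or>
         C = (tighten X M)(k := bisect_upper (tighten X M k) a)) \<and>
        node_valid X K C)"
  unfolding refine_child_def bisect_lower_def bisect_upper_def Let_def by simp

lemma lower_bound_singleton_boxes:
  assumes "\<And>k. k < K \<Longrightarrow> boxset (M k) = {mu k}"
  shows "lower_bound X K M = kcenter_obj X K mu"
  unfolding lower_bound_def kcenter_obj_def using assms by simp

lemma finite_UNIV_ex_max:
  fixes f :: "'a::finite \<Rightarrow> 'b::linorder"
  shows "\<exists>a. \<forall>i. f i \<le> f a"
proof -
  obtain a where "f a = Max (range f)"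
    using Max_in[of "range f"] by (metis finite finite_imageI image_is_empty rangeE UNIV_not_empty)
  then show ?thesis by (metis Max_ge finite finite_imageI rangeI)
qed

lemma refine_child_exists:
  assumes "finite X" and valid: "node_valid X K M" and "k < K"
    and crowded: "card (X \<inter> boxset (tighten X M k)) > 1"
  shows "\<exists>C. refine_child X K M C"
proof -
  define T where "T = tighten X M"
  obtain a where widest: "\<forall>i. snd (T k) $ i - fst (T k) $ i \<le> snd (T k) $ a - fst (T k) $ a"
    using finite_UNIV_ex_max[of "\<lambda>i. snd (T k) $ i - fst (T k) $ i"] by blast
  have "X \<inter> boxset (T k) \<noteq> {}"
    using crowded unfolding T_def by auto
  then obtain x where x: "x \<in> X \<inter> boxset (T k)" by blast
  obtain H where H: "H = bisect_lower (T k) a \<or> H = bisect_upper (T k) a" and "x \<in> boxset H"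
    using boxset_bisect_cover x by blast
  have "X \<inter> boxset (T j) \<noteq> {}" if "j < K" for j
    using samples_tighten[OF assms(1,2) that] valid that unfolding T_def node_valid_def by blast
  with x \<open>x \<in> boxset H\<close> have "node_valid X K (T(k := H))"
    unfolding node_valid_def by auto
  with H \<open>k < K\<close> crowded widest have "refine_child X K M (T(k := H))"
    unfolding refine_child_iff T_def by (intro exI[of _ k] exI[of _ a]) auto
  then show ?thesis by blast
qed

definition node_samples :: "(real^'n::finite) set \<Rightarrow> nat \<Rightarrow> 'n node \<Rightarrow> nat" where
  "node_samples X K M = (\<Sum>k<K. card (X \<inter> boxset (M k)))"

lemma node_valid_refine_child: "refine_child X K M C \<Longrightarrow> node_valid X K C"
  unfolding refine_child_def Let_def by blast

lemma bisected_box_loses_sample: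
  assumes "finite X" and "X \<inter> boxset B \<noteq> {}"
    and crowded: "card (X \<inter> boxset (hullbox X B)) > 1"
    and widest: "\<forall>i. snd (hullbox X B) $ i - fst (hullbox X B) $ i
                     \<le> snd (hullbox X B) $ a - fst (hullbox X B) $ a"
    and H: "H = bisect_lower (hullbox X B) a \<or> H = bisect_upper (hullbox X B) a"
  shows "X \<inter> boxset H \<subset> X \<inter> boxset B"
proof -
  let ?T = "hullbox X B"
  have pos: "fst ?T $ a < snd ?T $ a"
    using widest_side_pos_if_two_samples[OF crowded widest] .
  have "boxset H \<subseteq> boxset ?T"
    using H boxset_bisect_lower_subset boxset_bisect_upper_subset by blast
  then have sub: "X \<inter> boxset H \<subseteq> X \<inter> boxset B"
    using boxset_hullbox_subset[OF assms(1,2)] by blast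
  obtain y where y: "y \<in> X \<inter> boxset B" "y $ a = snd ?T $ a"
    using hullbox_upper_attained[OF assms(1,2)] .
  obtain z where z: "z \<in> X \<inter> boxset B" "z $ a = fst ?T $ a"
    using hullbox_lower_attained[OF assms(1,2)] .
  from H have "y \<notin> boxset H \<or> z \<notin> boxset H"
  proof
    assume "H = bisect_lower ?T a"
    moreover have "\<not> y $ a \<le> (fst ?T $ a + snd ?T $ a) / 2" using y(2) pos by simp
    ultimately show ?thesis using boxset_bisect_lower_coord by blast
  next
    assume "H = bisect_upper ?T a"
    moreover have "\<not> (fst ?T $ a + snd ?T $ a) / 2 \<le> z $ a" using z(2) pos by simp
    ultimately show ?thesis using boxset_bisect_upper_coord by blast
  qed
  with sub y(1) z(1) show ?thesis by blast
qed

lemma node_samples_refine_child_less: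
  assumes "finite X" and valid: "node_valid X K M" and "refine_child X K M C"
  shows "node_samples X K C < node_samples X K M"
proof -
  obtain k a where k: "k < K" and crowded: "card (X \<inter> boxset (tighten X M k)) > 1"
    and widest: "\<forall>i. snd (tighten X M k) $ i - fst (tighten X M k) $ i
                     \<le> snd (tighten X M k) $ a - fst (tighten X M k) $ a"
    and C: "C = (tighten X M)(k := bisect_lower (tighten X M k) a) \<or>
            C = (tighten X M)(k := bisect_upper (tighten X M k) a)"
    using assms(3) unfolding refine_child_iff by blast
  have ne: "X \<inter> boxset (M k) \<noteq> {}" using valid k unfolding node_valid_def by blast
  have lost: "X \<inter> boxset (C k) \<subset> X \<inter> boxset (M k)"
    using bisected_box_loses_sample[OF assms(1) ne, of a "C k"] crowded widest C
    unfolding tighten_def by auto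
  have kept: "X \<inter> boxset (C j) = X \<inter> boxset (M j)" if "j < K" "j \<noteq> k" for j
  proof -
    from C \<open>j \<noteq> k\<close> have "C j = tighten X M j" by (elim disjE) simp_all
    then show ?thesis using samples_tighten[OF assms(1) valid \<open>j < K\<close>] by simp
  qed
  show ?thesis unfolding node_samples_def
  proof (rule sum_strict_mono_ex1)
    show "\<forall>j\<in>{..<K}. card (X \<inter> boxset (C j)) \<le> card (X \<inter> boxset (M j))"
    proof
      fix j assume "j \<in> {..<K}"
      then show "card (X \<inter> boxset (C j)) \<le> card (X \<inter> boxset (M j))"
        using kept lost assms(1) by (cases "j = k") (auto intro: card_mono)
    qed
    show "\<exists>j\<in>{..<K}. card (X \<inter> boxset (C j)) < card (X \<inter> boxset (M j))"
      using k lost assms(1) by (intro bexI[of _ k] psubset_card_mono) auto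
  qed simp
qed

lemma wf_refine_child:
  assumes "finite X"
  shows "wf {(C, M). node_valid X K M \<and> refine_child X K M C}"
  by (rule wf_subset[OF wf_measure[of "node_samples X K"]])
    (auto dest: node_samples_refine_child_less[OF assms])

lemma crowded_box_if_gap:
  assumes "finite X" and valid: "node_valid X K M"
    and mu: "\<forall>k<K. mu k \<in> X \<inter> boxset (tighten X M k)"
    and gap: "lower_bound X K (tighten X M) < kcenter_obj X K mu"
  shows "\<exists>k<K. card (X \<inter> boxset (tighten X M k)) > 1"
proof (rule ccontr)
  assume none: "\<not> (\<exists>k<K. card (X \<inter> boxset (tighten X M k)) > 1)"
  have "boxset (tighten X M k) = {mu k}" if "k < K" for k
  proof -
    have "card (X \<inter> boxset (tighten X M k)) \<le> 1" "mu k \<in> X \<inter> boxset (tighten X M k)"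
      using none mu that by auto
    then have "X \<inter> boxset (tighten X M k) = {mu k}"
      using assms(1) card_le_Suc0_iff_eq[of "X \<inter> boxset (tighten X M k)"] by auto
    then have "X \<inter> boxset (M k) = {mu k}"
      using samples_tighten[OF assms(1) valid that] by simp
    then show ?thesis unfolding tighten_def by (rule boxset_hullbox_singleton)
  qed
  then have "lower_bound X K (tighten X M) = kcenter_obj X K mu"
    by (rule lower_bound_singleton_boxes)
  with gap show False by simp
qed

theorem lemma3:
  fixes X :: "(real^'n::finite) set" and K :: nat
  assumes "finite X" and "K \<ge> 1"
  shows "(\<forall>M mu alpha.
            node_valid X K M \<and>
            (\<forall>k<K. mu k \<in> X \<inter> boxset (tighten X M k)) \<and>
            alpha \<le> kcenter_obj X K mu \<and>
            lower_bound X K (tighten X M) < alpha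
            \<longrightarrow> (\<exists>C. refine_child X K M C))
       \<and> \<not> (\<exists>Ms :: nat \<Rightarrow> 'n node.
              node_valid X K (Ms 0) \<and> (\<forall>q. refine_child X K (Ms q) (Ms (Suc q))))"
proof (intro conjI allI impI notI; elim conjE exE)
  fix M mu and alpha :: real
  assume "node_valid X K M" "\<forall>k<K. mu k \<in> X \<inter> boxset (tighten X M k)"
    and "alpha \<le> kcenter_obj X K mu" "lower_bound X K (tighten X M) < alpha"
  then obtain k where "k < K" "card (X \<inter> boxset (tighten X M k)) > 1"
    using crowded_box_if_gap[OF assms(1)] by fastforce
  then show "\<exists>C. refine_child X K M C"
    using refine_child_exists[OF assms(1) \<open>node_valid X K M\<close>] by blast
next
  fix Ms :: "nat \<Rightarrow> 'n node"
  assume "node_valid X K (Ms 0)" and chain: "\<forall>q. refine_child X K (Ms q) (Ms (Suc q))"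
  then have "node_valid X K (Ms q)" for q by (cases q) (auto intro: node_valid_refine_child)
  with chain wf_refine_child[OF assms(1), of K] show False
    unfolding wf_iff_no_infinite_down_chain by blast
qed

end
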